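(* There is an absolute constant $C>0$ such that the following holds. Let $x\ge 2$ and let $A\subset \mathbb{N}\cap[x,\infty)$ be a primitive set. Then $$f(A)=\sum_{a\in A}\frac{1}{a\log a}\le 1+\frac{C}{\log x}.$$
   Context: $\mathbb{N}=\{1,2,3,\dots\}$. A set $A\subset\mathbb{N}$ is primitive if no element of $A$ divides another distinct element of $A$. For a set $A$ of integers $\ge 2$, $f(A)\coloneq\sum_{a\in A}\frac{1}{a\log a}$. *)

theory Defs
  imports "HOL-Analysis.Analysis"
begin

definition primitive :: "nat set \<Rightarrow> bool" where
  "primitive A \<longleftrightarrow> (\<forall>a\<in>A. \<forall>b\<in>A. a dvd b \<longrightarrow> a = b)"

definition f_sum :: "nat set \<Rightarrow> real" where
  "f_sum A = (\<Sum>\<^sub>\<infinity>a\<in>A. 1 / (real a * ln (real a)))"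

end

theory Submission
  imports Defs "HOL-Computational_Algebra.Primes" "HOL-Real_Asymp.Real_Asymp"
begin

(*
  Let P be the set of primes up to max A.  For b composed of primes in P and p in P,
    flow P b p = integral over s > 1 of (v_p(b) + 1) log p (b p)^(-s) prod_{q in P - {p}} (1 - q^(-s))
  is a flow along the edge b -> b p of the divisibility graph.  The derivative of
  b^(-s) prod_{q in P} (1 - q^(-s)) is the outflow density of b minus its inflow density, so
  the flow out of b is at most the flow into b, plus a unit source at b = 1.  A primitive set
  is an antichain of this graph and therefore receives total flow at most 1.  On the other
  hand the Euler product bound prod_{q in P} (1 - q^(-s)) >= (s - 1)/s shows that the flow into
  a is at least log a / (a (log a + 1)^2) = (1 + 1/log a)^(-2) / (a log a).
*)

section \<open>Euler products\<close>

(* No positivity hypothesis on n is needed: for n = 0 both sides vanish, as 0 powr x = 0 and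
   ln 0 = 0. *)
lemma has_real_derivative_nat_powr_neg:
  "((\<lambda>s. real n powr - s) has_real_derivative - ln (real n) * real n powr - s) (at s)"
  by (cases "n = 0") (auto intro!: derivative_eq_intros)

lemma continuous_on_nat_powr_neg [continuous_intros]:
  "continuous_on A (\<lambda>s. real n powr - s)"
  by (cases "n = 0") (auto intro!: continuous_intros)

lemma nat_powr_neg_le_1: "s \<ge> 0 \<Longrightarrow> real n powr - s \<le> 1"
  by (cases "n = 0") (simp_all add: powr_minus ge_one_powr_ge_zero inverse_le_1_iff)

lemma powr_neg_le_telescoping:
  fixes s x :: real
  assumes "s > 1" "x > 1"
  shows "x powr - s \<le> ((x - 1) powr (1 - s) - x powr (1 - s)) / (s - 1)"
proof -
  have "\<And>t. x - 1 \<le> t \<Longrightarrow> t \<le> x \<Longrightarrow>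
      ((\<lambda>t. t powr (1 - s)) has_real_derivative (1 - s) * t powr - s) (at t)"
    using assms has_real_derivative_powr[of _ "1 - s"] by auto
  from MVT2[of "x - 1" x, OF _ this] obtain z where z: "x - 1 < z" "z < x"
    and mvt: "x powr (1 - s) - (x - 1) powr (1 - s) = (x - (x - 1)) * ((1 - s) * z powr - s)"
    by auto
  have "(s - 1) * x powr - s \<le> (s - 1) * z powr - s"
    using assms z by (intro mult_left_mono powr_mono2') auto
  with mvt assms show ?thesis
    by (simp add: field_simps)
qed

lemma sum_powr_neg_le:
  fixes s :: real
  assumes "s > 1"
  shows "(\<Sum>n=1..N. real n powr - s) \<le> s / (s - 1)"
proof -
  have telescoped: "(\<Sum>n=1..N. real n powr - s) \<le> s / (s - 1) - real N powr (1 - s) / (s - 1)"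
    if "N \<ge> 1" for N
    using that
  proof (induction N rule: dec_induct)
    case base
    then show ?case using assms by (simp flip: diff_divide_distrib)
  next
    case (step N)
    then show ?case
      using powr_neg_le_telescoping[OF assms, of "real (Suc N)"] step by (simp add: diff_divide_distrib)
  qed
  show ?thesis
  proof (cases "N = 0")
    case True
    then show ?thesis using assms by simp
  next
    case False
    have "real N powr (1 - s) / (s - 1) \<ge> 0"
      using assms by simp
    with telescoped[of N] False show ?thesis by linarith
  qed
qed

lemma truncated_euler_product_le:
  fixes s :: real
  assumes P: "finite P" "\<And>p. p \<in> P \<Longrightarrow> prime p" and s: "s > 1"
  shows "(\<Prod>p\<in>P. \<Sum>k<K. (real p powr - s) ^ k) \<le> s / (s - 1)"
proof -
  (* By unique factorisation, expanding the product gives n^(-s) for distinct n. *)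
  define G where "G = PiE P (\<lambda>_. {..<K})"
  define n where "n g = (\<Prod>p\<in>P. p ^ g p)" for g :: "nat \<Rightarrow> nat"
  have P_pos: "p > 0" if "p \<in> P" for p
    using P(2)[OF that] prime_gt_0_nat by blast
  have multiplicity_n: "multiplicity p (n g) = g p" if "p \<in> P" for p g
    unfolding n_def using multiplicity_prod_prime_powers[OF P(1), of p g] P(2) that by auto
  have "(\<Prod>p\<in>P. \<Sum>k<K. (real p powr - s) ^ k) = (\<Sum>g\<in>G. \<Prod>p\<in>P. (real p powr - s) ^ g p)"
    unfolding G_def using P(1) by (rule prod_sum_PiE) simp
  also have "\<dots> = (\<Sum>g\<in>G. real (n g) powr - s)"
    unfolding n_def using P_pos
    by (simp add: powr_realpow[symmetric] powr_powr prod_powr_distrib mult.commute)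
  also have "\<dots> = (\<Sum>m\<in>n ` G. real m powr - s)"
  proof -
    have "inj_on n G"
      unfolding G_def by (rule inj_onI, rule PiE_ext) (auto simp flip: multiplicity_n)
    then show ?thesis by (simp add: sum.reindex)
  qed
  also have "\<dots> \<le> (\<Sum>m=1..(\<Prod>p\<in>P. p ^ K). real m powr - s)"
  proof (rule sum_mono2)
    have "1 \<le> n g \<and> n g \<le> (\<Prod>p\<in>P. p ^ K)" if "g \<in> G" for g
    proof -
      have "g p \<le> K" if "p \<in> P" for p
        using \<open>g \<in> G\<close> that unfolding G_def by (auto dest: PiE_mem)
      then show ?thesis
        unfolding n_def using P_pos by (auto simp: Suc_le_eq prod_pos intro!: prod_mono power_increasing)
    qed
    then show "n ` G \<subseteq> {1..\<Prod>p\<in>P. p ^ K}"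
      by auto
  qed auto
  also have "\<dots> \<le> s / (s - 1)"
    by (rule sum_powr_neg_le[OF s])
  finally show ?thesis .
qed

definition euler_prod :: "nat set \<Rightarrow> real \<Rightarrow> real" where
  "euler_prod P s = (\<Prod>p\<in>P. 1 - real p powr - s)"

lemma euler_prod_ge:
  fixes s :: real
  assumes P: "finite P" "\<And>p. p \<in> P \<Longrightarrow> prime p" and s: "s > 1"
  shows "(s - 1) / s \<le> euler_prod P s"
proof -
  have ratio: "0 < real p powr - s" "real p powr - s < 1" if "p \<in> P" for p
    using P(2)[OF that] prime_gt_1_nat[of p] s by (auto intro: powr_less_one)
  have "(\<lambda>k. (real p powr - s) ^ k) sums (1 / (1 - real p powr - s))" if "p \<in> P" for p
    using ratio[OF that] by (intro geometric_sums) simp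
  then have "(\<lambda>K. \<Prod>p\<in>P. \<Sum>k<K. (real p powr - s) ^ k) \<longlonglongrightarrow> (\<Prod>p\<in>P. 1 / (1 - real p powr - s))"
    by (intro tendsto_prod) (simp add: sums_def)
  then have "(\<Prod>p\<in>P. 1 / (1 - real p powr - s)) \<le> s / (s - 1)"
    by (rule LIMSEQ_le_const2) (use truncated_euler_product_le[OF P s] in simp)
  moreover have "euler_prod P s > 0"
    unfolding euler_prod_def using ratio by (simp add: prod_pos)
  ultimately show ?thesis
    using s unfolding euler_prod_def by (simp add: prod_dividef field_simps)
qed

lemma euler_prod_nonneg: "s \<ge> 0 \<Longrightarrow> 0 \<le> euler_prod P s"
  unfolding euler_prod_def by (intro prod_nonneg) (simp add: nat_powr_neg_le_1)

lemma euler_prod_le_1: "s \<ge> 0 \<Longrightarrow> euler_prod P s \<le> 1"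
  unfolding euler_prod_def by (intro prod_le_1) (simp add: nat_powr_neg_le_1)

lemma euler_prod_remove:
  "finite P \<Longrightarrow> p \<in> P \<Longrightarrow> euler_prod P s = (1 - real p powr - s) * euler_prod (P - {p}) s"
  unfolding euler_prod_def by (rule prod.remove)

lemma euler_prod_le_remove:
  assumes "finite P" "s \<ge> 0"
  shows "euler_prod P s \<le> euler_prod (P - {p}) s"
proof (cases "p \<in> P")
  case True
  then show ?thesis
    using assms euler_prod_nonneg[of s "P - {p}"] nat_powr_neg_le_1[of s p]
    by (simp add: euler_prod_remove mult_left_le_one_le)
qed simp

lemma has_real_derivative_euler_prod:
  "((\<lambda>s. euler_prod P s) has_real_derivative
     (\<Sum>p\<in>P. ln (real p) * real p powr - s * euler_prod (P - {p}) s)) (at s)"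
proof -
  have "((\<lambda>s. \<Prod>q\<in>P. 1 - real q powr - s) has_real_derivative
      (\<Sum>p\<in>P. (0 - - ln (real p) * real p powr - s) * (\<Prod>q\<in>P - {p}. 1 - real q powr - s))) (at s)"
    by (intro has_field_derivative_prod DERIV_diff DERIV_const has_real_derivative_nat_powr_neg)
  then show ?thesis
    by (simp add: euler_prod_def)
qed

lemma continuous_on_euler_prod [continuous_intros]: "continuous_on A (\<lambda>s. euler_prod P s)"
  unfolding euler_prod_def by (intro continuous_intros)

section \<open>Flows on the divisibility graph\<close>

(* \<phi> b p is the flow along the edge from b to b * p of the divisibility graph. *)
definition inflow :: "nat set \<Rightarrow> (nat \<Rightarrow> nat \<Rightarrow> real) \<Rightarrow> nat \<Rightarrow> real" where
  "inflow P \<phi> a = (\<Sum>p\<in>{p\<in>P. p dvd a}. \<phi> (a div p) p)"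

lemma sum_inflow_le_sum_outflow:
  fixes \<phi> :: "nat \<Rightarrow> nat \<Rightarrow> real"
  assumes "finite P" "finite S" "finite T" "\<And>b p. 0 \<le> \<phi> b p"
    and into_S: "\<And>a p. a \<in> T \<Longrightarrow> p \<in> P \<Longrightarrow> p dvd a \<Longrightarrow> a div p \<in> S"
  shows "(\<Sum>a\<in>T. inflow P \<phi> a) \<le> (\<Sum>b\<in>S. \<Sum>p\<in>P. \<phi> b p)"
proof -
  define E where "E = (SIGMA a:T. {p\<in>P. p dvd a})"
  define source where "source = (\<lambda>(a, p). (a div p, p :: nat))"
  have "inj_on source E"
    unfolding source_def E_def by (rule inj_onI) (auto, metis dvd_div_mult_self)
  have "(\<Sum>a\<in>T. inflow P \<phi> a) = (\<Sum>(a, p)\<in>E. \<phi> (a div p) p)"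
    unfolding inflow_def E_def using assms(1,3) by (subst sum.Sigma) auto
  also have "\<dots> = (\<Sum>(b, p)\<in>source ` E. \<phi> b p)"
    using sum.reindex[OF \<open>inj_on source E\<close>, of "\<lambda>(b, p). \<phi> b p"]
    by (simp add: source_def case_prod_beta)
  also have "\<dots> \<le> (\<Sum>(b, p)\<in>S \<times> P. \<phi> b p)"
    using assms into_S unfolding source_def E_def
    by (intro sum_mono2) (auto simp: case_prod_beta)
  also have "\<dots> = (\<Sum>b\<in>S. \<Sum>p\<in>P. \<phi> b p)"
    by (rule sum.cartesian_product[symmetric])
  finally show ?thesis .
qed

lemma primitive_sum_inflow_le_1:
  fixes \<phi> :: "nat \<Rightarrow> nat \<Rightarrow> real"
  assumes P: "finite P" "\<And>p. p \<in> P \<Longrightarrow> prime p" and nonneg: "\<And>b p. 0 \<le> \<phi> b p"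
    and conservation: "\<And>b. b > 0 \<Longrightarrow> prime_factors b \<subseteq> P \<Longrightarrow>
      (\<Sum>p\<in>P. \<phi> b p) \<le> inflow P \<phi> b + (if b = 1 then 1 else 0)"
    and A: "finite A" "primitive A" "\<And>a. a \<in> A \<Longrightarrow> a > 0" "\<And>a. a \<in> A \<Longrightarrow> prime_factors a \<subseteq> P"
  shows "(\<Sum>a\<in>A. inflow P \<phi> a) \<le> 1"
proof -
  (* The proper divisors of elements of A form a divisor-closed set S disjoint from A, so all
     flow into S \<union> A comes out of S; conservation on S leaves only the source at 1 for A. *)
  define S where "S = {d. \<exists>a\<in>A. d dvd a \<and> d \<noteq> a}"
  have below_A: "\<exists>a\<in>A. e dvd a" if "e \<in> S \<union> A" for e
    using that unfolding S_def by (blast intro: dvd_refl)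
  have S_A_disjoint: "S \<inter> A = {}"
    using A(2) unfolding S_def primitive_def by auto
  have finite_S: "finite S"
    by (rule finite_subset[of _ "\<Union>a\<in>A. {..a}"]) (auto simp: S_def A(1) A(3) dvd_imp_le)
  have S_pos: "d > 0" "prime_factors d \<subseteq> P" if d: "d \<in> S" for d
  proof -
    obtain a where "a \<in> A" "d dvd a"
      using below_A[of d] d by blast
    then show "d > 0" "prime_factors d \<subseteq> P"
      using A(3,4)[of a] dvd_prime_factors[of a d] by (auto intro: dvd_pos_nat)
  qed
  have S_closed: "e div p \<in> S" if e: "e \<in> S \<union> A" and p: "p \<in> P" "p dvd e" for e p
  proof -
    obtain a where a: "a \<in> A" "e dvd a"
      using below_A[OF e] by blast
    have "e > 0"
      using e S_pos A(3) by blast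
    have "e div p < e"
      using \<open>e > 0\<close> P(2)[OF p(1)] by (metis div_less_dividend prime_gt_1_nat)
    moreover have "e \<le> a"
      using a A(3) by (simp add: dvd_imp_le)
    moreover have "e div p dvd a"
      using a(2) p(2) by (metis dvd_div_mult_self dvd_mult_left)
    ultimately show ?thesis
      unfolding S_def using a(1) by auto
  qed
  have "(\<Sum>d\<in>S. inflow P \<phi> d) + (\<Sum>a\<in>A. inflow P \<phi> a) = (\<Sum>e\<in>S \<union> A. inflow P \<phi> e)"
    using finite_S A(1) S_A_disjoint by (simp add: sum.union_disjoint)
  also have "\<dots> \<le> (\<Sum>d\<in>S. \<Sum>p\<in>P. \<phi> d p)"
    using P(1) finite_S A(1) nonneg S_closed by (intro sum_inflow_le_sum_outflow) auto
  also have "\<dots> \<le> (\<Sum>d\<in>S. inflow P \<phi> d + (if d = 1 then 1 else 0))"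
    using conservation S_pos by (intro sum_mono) auto
  also have "\<dots> \<le> (\<Sum>d\<in>S. inflow P \<phi> d) + 1"
    using finite_S by (simp add: sum.distrib)
  finally show ?thesis by simp
qed

lemma set_integral_sum:
  fixes f :: "'i \<Rightarrow> 'a \<Rightarrow> real"
  assumes "\<And>i. i \<in> I \<Longrightarrow> set_integrable M A (f i)"
  shows "set_integrable M A (\<lambda>x. \<Sum>i\<in>I. f i x)"
    and "(LINT x:A|M. \<Sum>i\<in>I. f i x) = (\<Sum>i\<in>I. LINT x:A|M. f i x)"
  using assms unfolding set_integrable_def set_lebesgue_integral_def
  by (simp_all add: sum_distrib_left integral_sum)

lemma set_integral_nonneg:
  fixes f :: "'a \<Rightarrow> real"
  assumes "\<And>x. x \<in> A \<Longrightarrow> 0 \<le> f x"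
  shows "0 \<le> (LINT x:A|M. f x)"
  unfolding set_lebesgue_integral_def
  by (rule Bochner_Integration.integral_nonneg) (simp add: assms indicator_def)

lemma set_integral_Ioi_FTC_integrable:
  fixes f F :: "real \<Rightarrow> real"
  assumes deriv: "\<And>s. a < s \<Longrightarrow> (F has_real_derivative f s) (at s)"
    and cont: "\<And>s. a < s \<Longrightarrow> isCont f s"
    and integrable: "set_integrable lborel {a<..} f"
    and left: "continuous (at_right a) F" and right: "(F \<longlongrightarrow> B) at_top"
  shows "(LINT s:{a<..}|lborel. f s) = B - F a"
proof -
  have "(LBINT s=ereal a..\<infinity>. f s) = B - F a"
  proof (rule interval_integral_FTC_integrable)
    show "set_integrable lborel (einterval (ereal a) \<infinity>) f"
      using integrable by simp
    show "((F \<circ> real_of_ereal) \<longlongrightarrow> F a) (at_right (ereal a))"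
      using left by (simp add: ereal_tendsto_simps continuous_within)
    show "((F \<circ> real_of_ereal) \<longlongrightarrow> B) (at_left \<infinity>)"
      using right by (simp add: ereal_tendsto_simps)
  qed (use deriv cont in \<open>auto simp: has_real_derivative_iff_has_vector_derivative[symmetric]\<close>)
  then show ?thesis
    by (simp add: interval_integral_to_infinity_eq)
qed

lemma set_integral_Ioi_FTC_nonneg:
  fixes f F :: "real \<Rightarrow> real"
  assumes deriv: "\<And>s. a < s \<Longrightarrow> (F has_real_derivative f s) (at s)"
    and cont: "\<And>s. a < s \<Longrightarrow> isCont f s"
    and nonneg: "\<And>s. a < s \<Longrightarrow> 0 \<le> f s"
    and left: "continuous (at_right a) F" and right: "(F \<longlongrightarrow> B) at_top"
  shows "set_integrable lborel {a<..} f" "(LINT s:{a<..}|lborel. f s) = B - F a"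
proof -
  have "((F \<circ> real_of_ereal) \<longlongrightarrow> F a) (at_right (ereal a))"
    using left by (simp add: ereal_tendsto_simps continuous_within)
  moreover have "((F \<circ> real_of_ereal) \<longlongrightarrow> B) (at_left \<infinity>)"
    using right by (simp add: ereal_tendsto_simps)
  ultimately have "set_integrable lborel (einterval (ereal a) \<infinity>) f"
    using deriv cont nonneg by (intro interval_integral_FTC_nonneg) auto
  then show "set_integrable lborel {a<..} f"
    by simp
  then show "(LINT s:{a<..}|lborel. f s) = B - F a"
    using assms by (intro set_integral_Ioi_FTC_integrable) auto
qed

lemma set_integral_powr_neg:
  fixes x :: real
  assumes "x > 1"
  shows "set_integrable lborel {1<..} (\<lambda>s. x powr - s)"
    and "(LINT s:{1<..}|lborel. x powr - s) = 1 / (x * ln x)"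
proof -
  define F where "F s = - (x powr - s) / ln x" for s
  have deriv: "(F has_real_derivative x powr - s) (at s)" for s
    unfolding F_def using assms by (auto intro!: derivative_eq_intros)
  have lim: "(F \<longlongrightarrow> 0) at_top"
    unfolding F_def using assms by real_asymp
  have cont: "continuous (at_right 1) F"
    unfolding F_def using assms by (intro continuous_intros) auto
  have "set_integrable lborel {1<..} (\<lambda>s. x powr - s)"
      "(LINT s:{1<..}|lborel. x powr - s) = 0 - F 1"
    by (rule set_integral_Ioi_FTC_nonneg[OF deriv _ _ cont lim];
        use assms in \<open>auto intro!: continuous_intros\<close>)+
  then show "set_integrable lborel {1<..} (\<lambda>s. x powr - s)"
      "(LINT s:{1<..}|lborel. x powr - s) = 1 / (x * ln x)"
    using assms by (auto simp: F_def powr_minus divide_inverse)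
qed

lemma set_integral_linear_times_exp:
  fixes c :: real
  assumes "c > 0"
  shows "set_integrable lborel {1<..} (\<lambda>s. (s - 1) * exp (- c * (s - 1)))"
    and "(LINT s:{1<..}|lborel. (s - 1) * exp (- c * (s - 1))) = 1 / c\<^sup>2"
proof -
  define F where "F s = - exp (- c * (s - 1)) * ((s - 1) / c + 1 / c\<^sup>2)" for s
  have deriv: "(F has_real_derivative (s - 1) * exp (- c * (s - 1))) (at s)" for s
    unfolding F_def using assms
    by (auto intro!: derivative_eq_intros simp: field_simps power2_eq_square)
  have lim: "(F \<longlongrightarrow> 0) at_top"
    unfolding F_def using assms by real_asymp
  have cont: "continuous (at_right 1) F"
    unfolding F_def using assms by (intro continuous_intros) auto
  have "set_integrable lborel {1<..} (\<lambda>s. (s - 1) * exp (- c * (s - 1)))"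
      "(LINT s:{1<..}|lborel. (s - 1) * exp (- c * (s - 1))) = 0 - F 1"
    by (rule set_integral_Ioi_FTC_nonneg[OF deriv _ _ cont lim];
        use assms in \<open>auto intro!: continuous_intros\<close>)+
  then show "set_integrable lborel {1<..} (\<lambda>s. (s - 1) * exp (- c * (s - 1)))"
      "(LINT s:{1<..}|lborel. (s - 1) * exp (- c * (s - 1))) = 1 / c\<^sup>2"
    using assms by (auto simp: F_def)
qed

section \<open>The Euler product flow\<close>

definition flow_density :: "nat set \<Rightarrow> nat \<Rightarrow> nat \<Rightarrow> real \<Rightarrow> real" where
  "flow_density P b p s =
     (real (multiplicity p b) + 1) * ln (real p) * real (b * p) powr - s * euler_prod (P - {p}) s"

definition flow :: "nat set \<Rightarrow> nat \<Rightarrow> nat \<Rightarrow> real" where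
  "flow P b p = (LINT s:{1<..}|lborel. flow_density P b p s)"

lemma flow_density_nonneg: "s \<ge> 0 \<Longrightarrow> 0 \<le> flow_density P b p s"
  unfolding flow_density_def by (cases "p = 0") (simp_all add: euler_prod_nonneg)

lemma continuous_on_flow_density [continuous_intros]:
  "continuous_on A (\<lambda>s. flow_density P b p s)"
  unfolding flow_density_def by (intro continuous_intros)

lemma flow_nonneg: "0 \<le> flow P b p"
  unfolding flow_def by (rule set_integral_nonneg) (simp add: flow_density_nonneg)

lemma set_integrable_flow_density:
  assumes "b > 0" "p > 1"
  shows "set_integrable lborel {1<..} (flow_density P b p)"
proof (rule set_integrable_bound)
  define C where "C = (real (multiplicity p b) + 1) * ln (real p)"
  have "1 < b * p"
    using assms by (cases b) auto
  then have "real (b * p) > 1"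
    by (metis of_nat_1 of_nat_less_iff)
  from set_integral_powr_neg(1)[OF this]
  show "set_integrable lborel {1<..} (\<lambda>s. C * real (b * p) powr - s)"
    by simp
  have "flow_density P b p \<in> borel_measurable borel"
    by (intro borel_measurable_continuous_onI continuous_intros)
  then show "set_borel_measurable lborel {1<..} (flow_density P b p)"
    unfolding set_borel_measurable_def by measurable
  have "\<bar>flow_density P b p s\<bar> \<le> C * real (b * p) powr - s" if "s > 1" for s
    using that assms flow_density_nonneg[of s P b p] euler_prod_le_1[of s "P - {p}"]
    unfolding flow_density_def C_def by (simp add: mult_left_le)
  then show "AE s in lborel. s \<in> {1<..} \<longrightarrow> norm (flow_density P b p s) \<le> norm (C * real (b * p) powr - s)"
    by (auto intro!: AE_I2 order_trans[OF _ abs_ge_self])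
qed

lemma ln_eq_sum_multiplicity:
  fixes b :: nat
  assumes P: "finite P" "\<And>p. p \<in> P \<Longrightarrow> prime p" and b: "b > 0" "prime_factors b \<subseteq> P"
  shows "ln (real b) = (\<Sum>p\<in>P. real (multiplicity p b) * ln (real p))"
proof -
  have "real b = real (\<Prod>p\<in>prime_factors b. p ^ multiplicity p b)"
    using prime_factorization_nat[OF b(1)] by (rule arg_cong)
  also have "\<dots> = (\<Prod>p\<in>prime_factors b. real p ^ multiplicity p b)"
    by (simp add: of_nat_prod)
  finally have "ln (real b) = (\<Sum>p\<in>prime_factors b. ln (real p ^ multiplicity p b))"
    by (simp only:) (rule ln_prod; auto dest: in_prime_factors_imp_prime simp: prime_gt_0_nat)
  also have "\<dots> = (\<Sum>p\<in>prime_factors b. real (multiplicity p b) * ln (real p))"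
    by (intro sum.cong refl) (auto dest: in_prime_factors_imp_prime simp: ln_realpow prime_gt_0_nat)
  also have "\<dots> = (\<Sum>p\<in>P. real (multiplicity p b) * ln (real p))"
  proof (intro sum.mono_neutral_left P(1) b(2) ballI)
    fix p assume "p \<in> P - prime_factors b"
    then have "\<not> p dvd b"
      using P(2) b(1) by (auto simp: in_prime_factors_iff)
    then show "real (multiplicity p b) * ln (real p) = 0"
      by (simp add: not_dvd_imp_multiplicity_0)
  qed
  finally show ?thesis .
qed

lemma flow_density_div:
  assumes "prime p" "p dvd b" "b > 0"
  shows "flow_density P (b div p) p s =
    real (multiplicity p b) * ln (real p) * real b powr - s * euler_prod (P - {p}) s"
proof -
  have "b div p \<noteq> 0"
    using assms by (auto simp: dvd_div_eq_0_iff)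
  then have "multiplicity p (p * (b div p)) = Suc (multiplicity p (b div p))"
    using assms(1) by (intro multiplicity_times_same) auto
  moreover have "p * (b div p) = b"
    using assms(2) by simp
  ultimately show ?thesis
    by (simp add: flow_density_def mult.commute)
qed

lemma inflow_flow_density_eq:
  assumes "finite P" "\<And>p. p \<in> P \<Longrightarrow> prime p" "b > 0"
  shows "inflow P (\<lambda>c q. flow_density P c q s) b =
    (\<Sum>p\<in>P. real (multiplicity p b) * ln (real p) * real b powr - s * euler_prod (P - {p}) s)"
proof -
  have "inflow P (\<lambda>c q. flow_density P c q s) b =
      (\<Sum>p\<in>{p\<in>P. p dvd b}. real (multiplicity p b) * ln (real p) * real b powr - s * euler_prod (P - {p}) s)"
    unfolding inflow_def by (intro sum.cong refl) (simp add: assms flow_density_div)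
  also have "\<dots> = (\<Sum>p\<in>P. real (multiplicity p b) * ln (real p) * real b powr - s * euler_prod (P - {p}) s)"
    using assms(1) by (intro sum.mono_neutral_left) (auto simp: not_dvd_imp_multiplicity_0)
  finally show ?thesis .
qed

lemma has_real_derivative_flow_potential:
  assumes P: "finite P" "\<And>p. p \<in> P \<Longrightarrow> prime p" and b: "b > 0" "prime_factors b \<subseteq> P"
  shows "((\<lambda>s. real b powr - s * euler_prod P s) has_real_derivative
    (\<Sum>p\<in>P. flow_density P b p s) - inflow P (\<lambda>c q. flow_density P c q s) b) (at s)"
proof -
  define m where "m p = real (multiplicity p b)" for p
  define Q where "Q p = euler_prod (P - {p}) s" for p
  define B where "B = real b powr - s"
  have outflow:
    "(\<Sum>p\<in>P. flow_density P b p s) = (\<Sum>p\<in>P. (m p + 1) * ln (real p) * (B * real p powr - s) * Q p)"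
    unfolding flow_density_def m_def Q_def B_def by (simp add: powr_mult)
  have inflow: "inflow P (\<lambda>c q. flow_density P c q s) b = (\<Sum>p\<in>P. m p * ln (real p) * B * Q p)"
    unfolding m_def Q_def B_def by (rule inflow_flow_density_eq[OF P b(1)])
  have "ln (real b) * euler_prod P s = (\<Sum>p\<in>P. m p * ln (real p) * euler_prod P s)"
    by (simp add: ln_eq_sum_multiplicity[OF P b] m_def sum_distrib_right)
  also have "\<dots> = (\<Sum>p\<in>P. m p * ln (real p) * ((1 - real p powr - s) * Q p))"
    using P(1) by (intro sum.cong refl) (simp add: euler_prod_remove Q_def)
  finally have ln_b:
    "ln (real b) * euler_prod P s = (\<Sum>p\<in>P. m p * ln (real p) * ((1 - real p powr - s) * Q p))" .
  (* Termwise, (m + 1) p^(-s) - m = p^(-s) - m (1 - p^(-s)). *)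
  have "(\<Sum>p\<in>P. flow_density P b p s) - inflow P (\<lambda>c q. flow_density P c q s) b =
      (\<Sum>p\<in>P. B * (ln (real p) * real p powr - s * Q p)
        - B * (m p * ln (real p) * ((1 - real p powr - s) * Q p)))"
    unfolding outflow inflow sum_subtractf[symmetric] by (intro sum.cong refl) (simp add: algebra_simps)
  also have "\<dots> = - ln (real b) * B * euler_prod P s + B * (\<Sum>p\<in>P. ln (real p) * real p powr - s * Q p)"
    unfolding sum_subtractf sum_distrib_left[symmetric] ln_b[symmetric] by simp
  finally have derivative_eq:
    "(\<Sum>p\<in>P. flow_density P b p s) - inflow P (\<lambda>c q. flow_density P c q s) b =
      - ln (real b) * B * euler_prod P s + B * (\<Sum>p\<in>P. ln (real p) * real p powr - s * Q p)" .
  show ?thesis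
    unfolding derivative_eq B_def Q_def
    by (rule DERIV_cong[OF DERIV_mult[OF has_real_derivative_nat_powr_neg has_real_derivative_euler_prod]])
       (simp add: algebra_simps)
qed

lemma tendsto_flow_potential:
  assumes P: "finite P" "\<And>p. p \<in> P \<Longrightarrow> prime p" and b: "b > 0"
  shows "((\<lambda>s. real b powr - s * euler_prod P s) \<longlongrightarrow> (if b = 1 then 1 else 0)) at_top"
proof -
  have powr_neg_to_0: "((\<lambda>s. real n powr - s) \<longlongrightarrow> 0) at_top" if "n > 1" for n
  proof -
    have "real n > 1"
      using that by simp
    then show ?thesis
      by real_asymp
  qed
  then have "((\<lambda>s. euler_prod P s) \<longlongrightarrow> (\<Prod>p\<in>P. 1 - 0)) at_top"
    unfolding euler_prod_def using P(2) prime_gt_1_nat by (intro tendsto_intros) auto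
  moreover have "((\<lambda>s. real b powr - s) \<longlongrightarrow> (if b = 1 then 1 else 0)) at_top"
    using b powr_neg_to_0[of b] by (cases "b = 1") auto
  ultimately show ?thesis
    using tendsto_mult by fastforce
qed

lemma set_integral_outflow_density:
  assumes "\<And>p. p \<in> P \<Longrightarrow> prime p" "b > 0"
  shows "set_integrable lborel {1<..} (\<lambda>s. \<Sum>p\<in>P. flow_density P b p s)"
    and "(LINT s:{1<..}|lborel. \<Sum>p\<in>P. flow_density P b p s) = (\<Sum>p\<in>P. flow P b p)"
  using assms prime_gt_1_nat
  by (auto simp: flow_def intro!: set_integral_sum set_integrable_flow_density)

lemma set_integral_inflow_density:
  assumes "\<And>p. p \<in> P \<Longrightarrow> prime p" "b > 0"
  shows "set_integrable lborel {1<..} (\<lambda>s. inflow P (\<lambda>c q. flow_density P c q s) b)"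
    and "(LINT s:{1<..}|lborel. inflow P (\<lambda>c q. flow_density P c q s) b) = inflow P (flow P) b"
proof -
  have "set_integrable lborel {1<..} (flow_density P (b div p) p)" if "p \<in> P" "p dvd b" for p
    using assms that prime_gt_1_nat[of p]
    by (intro set_integrable_flow_density) (auto simp: dvd_div_eq_0_iff)
  then show "set_integrable lborel {1<..} (\<lambda>s. inflow P (\<lambda>c q. flow_density P c q s) b)"
      "(LINT s:{1<..}|lborel. inflow P (\<lambda>c q. flow_density P c q s) b) = inflow P (flow P) b"
    unfolding inflow_def flow_def by (auto intro!: set_integral_sum)
qed

lemma flow_conservation:
  assumes P: "finite P" "\<And>p. p \<in> P \<Longrightarrow> prime p" and b: "b > 0" "prime_factors b \<subseteq> P"
  shows "(\<Sum>p\<in>P. flow P b p) \<le> inflow P (flow P) b + (if b = 1 then 1 else 0)"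
proof -
  define E where "E s = real b powr - s * euler_prod P s" for s
  define D where
    "D s = (\<Sum>p\<in>P. flow_density P b p s) - inflow P (\<lambda>c q. flow_density P c q s) b" for s
  have "set_integrable lborel {1<..} D"
    "(LINT s:{1<..}|lborel. D s) = (\<Sum>p\<in>P. flow P b p) - inflow P (flow P) b"
    unfolding D_def
    using set_integral_outflow_density[OF P(2) b(1)] set_integral_inflow_density[OF P(2) b(1)]
    by auto
  moreover have "(LINT s:{1<..}|lborel. D s) = (if b = 1 then 1 else 0) - E 1"
  proof (rule set_integral_Ioi_FTC_integrable)
    show "(E has_real_derivative D s) (at s)" for s
      unfolding E_def D_def by (rule has_real_derivative_flow_potential[OF P b])
    have "continuous_on UNIV D"
      unfolding D_def inflow_def by (intro continuous_intros)
    then show "isCont D s" for s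
      by (simp add: continuous_on_eq_continuous_at)
    have "continuous_on UNIV E"
      unfolding E_def by (intro continuous_intros)
    then show "continuous (at_right 1) E"
      by (simp add: continuous_on_eq_continuous_at continuous_at_imp_continuous_at_within)
    show "(E \<longlongrightarrow> (if b = 1 then 1 else 0)) at_top"
      unfolding E_def by (rule tendsto_flow_potential[OF P b(1)])
  qed fact
  moreover have "E 1 \<ge> 0"
    unfolding E_def by (simp add: euler_prod_nonneg)
  ultimately show ?thesis
    by linarith
qed

lemma inflow_density_ge:
  assumes P: "finite P" "\<And>p. p \<in> P \<Longrightarrow> prime p" and b: "b > 0" "prime_factors b \<subseteq> P"
    and "s \<ge> 0"
  shows "ln (real b) * real b powr - s * euler_prod P s \<le> inflow P (\<lambda>c q. flow_density P c q s) b"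
proof -
  have "ln (real b) * real b powr - s * euler_prod P s =
      (\<Sum>p\<in>P. real (multiplicity p b) * ln (real p) * real b powr - s * euler_prod P s)"
    by (simp add: ln_eq_sum_multiplicity[OF P b] sum_distrib_right)
  also have "\<dots> \<le>
      (\<Sum>p\<in>P. real (multiplicity p b) * ln (real p) * real b powr - s * euler_prod (P - {p}) s)"
    using P \<open>s \<ge> 0\<close> prime_ge_1_nat
    by (intro sum_mono mult_left_mono euler_prod_le_remove) auto
  also have "\<dots> = inflow P (\<lambda>c q. flow_density P c q s) b"
    by (rule inflow_flow_density_eq[symmetric, OF P b(1)])
  finally show ?thesis .
qed

lemma inflow_flow_ge:
  assumes P: "finite P" "\<And>p. p \<in> P \<Longrightarrow> prime p" and a: "a > 1" "prime_factors a \<subseteq> P"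
  shows "ln (real a) / (real a * (ln (real a) + 1)\<^sup>2) \<le> inflow P (flow P) a"
proof -
  define L where "L = ln (real a)"
  (* g s = L a^(-s) (s - 1) e^(1 - s), and (s - 1) e^(1 - s) <= (s - 1)/s <= euler_prod P s. *)
  define g where "g s = L / real a * ((s - 1) * exp (- (L + 1) * (s - 1)))" for s
  have "L > 0"
    using a by (simp add: L_def)
  have g_integral: "set_integrable lborel {1<..} g"
    "(LINT s:{1<..}|lborel. g s) = L / (real a * (L + 1)\<^sup>2)"
    using set_integral_linear_times_exp[of "L + 1"] \<open>L > 0\<close> unfolding g_def by simp_all
  have "g s \<le> inflow P (\<lambda>c q. flow_density P c q s) a" if "s > 1" for s
  proof -
    have "exp (- L) = 1 / real a"
      using a by (simp add: L_def exp_minus inverse_eq_divide)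
    then have "g s = L * (s - 1) * (exp (- L) * exp (- (L + 1) * (s - 1)))"
      by (simp add: g_def)
    also have "exp (- L) * exp (- (L + 1) * (s - 1)) = real a powr - s * exp (- (s - 1))"
      using a by (simp add: powr_def L_def mult_exp_exp algebra_simps)
    also have "L * (s - 1) * (real a powr - s * exp (- (s - 1))) =
        L * real a powr - s * ((s - 1) * exp (- (s - 1)))"
      by (simp add: algebra_simps)
    also have "\<dots> \<le> L * real a powr - s * euler_prod P s"
    proof (intro mult_left_mono)
      have "s \<le> exp (s - 1)"
        using exp_ge_add_one_self[of "s - 1"] by simp
      then have "1 / exp (s - 1) \<le> 1 / s"
        using that by (intro divide_left_mono) auto
      then have "exp (- (s - 1)) \<le> 1 / s"
        by (simp only: exp_minus inverse_eq_divide)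
      then have "(s - 1) * exp (- (s - 1)) \<le> (s - 1) * (1 / s)"
        using that by (intro mult_left_mono) auto
      also have "\<dots> \<le> euler_prod P s"
        using euler_prod_ge[OF P that] by simp
      finally show "(s - 1) * exp (- (s - 1)) \<le> euler_prod P s" .
    qed (use \<open>L > 0\<close> in simp)
    also have "\<dots> \<le> inflow P (\<lambda>c q. flow_density P c q s) a"
      unfolding L_def using a that by (intro inflow_density_ge[OF P]) auto
    finally show ?thesis .
  qed
  then have "(LINT s:{1<..}|lborel. g s) \<le>
      (LINT s:{1<..}|lborel. inflow P (\<lambda>c q. flow_density P c q s) a)"
    using a by (intro set_integral_mono g_integral(1) set_integral_inflow_density(1)[OF P(2)]) auto
  then show ?thesis
    using a g_integral(2) set_integral_inflow_density(2)[OF P(2)] by (simp add: L_def)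
qed

section \<open>The bound for primitive sets\<close>

lemma primitive_subset: "primitive A \<Longrightarrow> B \<subseteq> A \<Longrightarrow> primitive B"
  unfolding primitive_def by blast

lemma primitive_finite_sum_le:
  fixes x :: real
  assumes x: "x \<ge> 2" and A: "finite A" "primitive A" "\<And>a. a \<in> A \<Longrightarrow> real a \<ge> x"
  shows "(\<Sum>a\<in>A. 1 / (real a * ln (real a))) \<le> (1 + 1 / ln x)\<^sup>2"
proof -
  define P where "P = {p. prime p \<and> p \<le> Max A}"
  have P: "finite P" "\<And>p. p \<in> P \<Longrightarrow> prime p"
    unfolding P_def by auto
  have a_gt_1: "a > 1" if "a \<in> A" for a
    using A(3)[OF that] x by linarith
  have factors: "prime_factors a \<subseteq> P" if "a \<in> A" for a
    using a_gt_1[OF that] A(1) that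
    by (auto simp: P_def in_prime_factors_iff intro: order.trans[OF dvd_imp_le Max_ge])
  have total: "(\<Sum>a\<in>A. inflow P (flow P) a) \<le> 1"
  proof (rule primitive_sum_inflow_le_1[OF P flow_nonneg _ A(1,2) _ factors])
    show "a \<in> A \<Longrightarrow> a > 0" for a
      using a_gt_1[of a] by simp
  qed (use flow_conservation[OF P] in auto)
  have "ln x > 0"
    using x by simp
  have "1 / (real a * ln (real a)) \<le> (1 + 1 / ln x)\<^sup>2 * inflow P (flow P) a" if "a \<in> A" for a
  proof -
    define L where "L = ln (real a)"
    have "ln x \<le> L"
      unfolding L_def using A(3)[OF that] x by simp
    then have "(1 + 1 / L)\<^sup>2 \<le> (1 + 1 / ln x)\<^sup>2"
      using \<open>ln x > 0\<close> by (intro power_mono add_left_mono divide_left_mono) auto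
    have "1 + 1 / L = (L + 1) / L" "L > 0"
      using \<open>ln x > 0\<close> \<open>ln x \<le> L\<close> by (auto simp: field_simps)
    then have "1 / (real a * L) = (1 + 1 / L)\<^sup>2 * (L / (real a * (L + 1)\<^sup>2))"
      using a_gt_1[OF that] by (simp add: power_divide power2_eq_square)
    also have "\<dots> \<le> (1 + 1 / ln x)\<^sup>2 * inflow P (flow P) a"
      using \<open>(1 + 1 / L)\<^sup>2 \<le> (1 + 1 / ln x)\<^sup>2\<close> inflow_flow_ge[OF P a_gt_1[OF that] factors[OF that]]
        \<open>ln x > 0\<close> \<open>ln x \<le> L\<close>
      unfolding L_def by (intro mult_mono) auto
    finally show ?thesis
      unfolding L_def .
  qed
  then have "(\<Sum>a\<in>A. 1 / (real a * ln (real a))) \<le> (\<Sum>a\<in>A. (1 + 1 / ln x)\<^sup>2 * inflow P (flow P) a)"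
    by (rule sum_mono)
  also have "\<dots> \<le> (1 + 1 / ln x)\<^sup>2"
    using total by (simp add: sum_distrib_left[symmetric] mult_left_le)
  finally show ?thesis .
qed

lemma primitive_infsum_le:
  fixes x :: real
  assumes x: "x \<ge> 2" and A: "primitive A" "\<And>a. a \<in> A \<Longrightarrow> real a \<ge> x"
  shows "(\<lambda>a. 1 / (real a * ln (real a))) summable_on A"
    and "f_sum A \<le> (1 + 1 / ln x)\<^sup>2"
proof -
  have finite_sums: "(\<Sum>a\<in>F. 1 / (real a * ln (real a))) \<le> (1 + 1 / ln x)\<^sup>2"
    if "finite F" "F \<subseteq> A" for F
    using x that A primitive_subset[OF A(1) that(2)] by (intro primitive_finite_sum_le) auto
  have "0 \<le> 1 / (real a * ln (real a))" if "a \<in> A" for a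
  proof -
    have "real a \<ge> 1"
      using A(2)[OF that] x by linarith
    then show ?thesis
      by simp
  qed
  then show summable: "(\<lambda>a. 1 / (real a * ln (real a))) summable_on A"
    using finite_sums by (intro nonneg_bdd_above_summable_on bdd_aboveI) auto
  show "f_sum A \<le> (1 + 1 / ln x)\<^sup>2"
    unfolding f_sum_def by (rule infsum_le_finite_sums[OF summable finite_sums])
qed

lemma one_plus_inverse_ln_squared_le:
  fixes x :: real
  assumes "x \<ge> 2"
  shows "(1 + 1 / ln x)\<^sup>2 \<le> 1 + (2 + 1 / ln 2) / ln x"
proof -
  define u where "u = 1 / ln x"
  have "0 \<le> u" "u \<le> 1 / ln 2"
    unfolding u_def using assms by (auto intro: divide_left_mono)
  then have "u * u \<le> 1 / ln 2 * u"
    by (intro mult_right_mono)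
  then have "(1 + u)\<^sup>2 \<le> 1 + (2 + 1 / ln 2) * u"
    by (simp add: power2_eq_square algebra_simps)
  then show ?thesis
    by (simp add: u_def)
qed

theorem theorem1p1:
  shows "\<exists>C::real. C > 0 \<and>
    (\<forall>(x::real) (A::nat set). x \<ge> 2 \<longrightarrow> (\<forall>a\<in>A. real a \<ge> x) \<longrightarrow> primitive A \<longrightarrow>
       ((\<lambda>a. 1 / (real a * ln (real a))) summable_on A) \<and> f_sum A \<le> 1 + C / ln x)"
proof (intro exI[of _ "2 + 1 / ln 2"] conjI allI impI)
  fix x :: real and A :: "nat set"
  assume x: "x \<ge> 2" and A: "\<forall>a\<in>A. real a \<ge> x" "primitive A"
  show "(\<lambda>a. 1 / (real a * ln (real a))) summable_on A"
    using primitive_infsum_le(1)[OF x A(2)] A(1) by blast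
  have "f_sum A \<le> (1 + 1 / ln x)\<^sup>2"
    using primitive_infsum_le(2)[OF x A(2)] A(1) by blast
  also have "\<dots> \<le> 1 + (2 + 1 / ln 2) / ln x"
    by (rule one_plus_inverse_ln_squared_le[OF x])
  finally show "f_sum A \<le> 1 + (2 + 1 / ln 2) / ln x" .
qed (simp add: add_pos_pos)

end
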